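(* Let $(M,\mathrm{dist})$ be a compact metric space and $\phi$ a topological flow on $M$. Suppose $\mathrm{Sing}(\phi)$ is a finite set and every $p\in\mathrm{Sing}(\phi)$ is Lyapunov stable or Lyapunov unstable. Then $\phi$ has the oriented shadowing property if and only if $\phi$ has the standard shadowing property.
   Context: A topological flow on $M$ is a continuous map $\phi:\mathbb{R}\times M\to M$ with $\phi(0,x)=x$ and $\phi(s+t,x)=\phi(s,\phi(t,x))$ for all $s,t\in\mathbb{R}$, $x\in M$. $\mathrm{Sing}(\phi)=\{x\in M: \phi(t,x)=x\ \forall t\in\mathbb{R}\}$. A point $p\in\mathrm{Sing}(\phi)$ is Lyapunov stable if for every neighborhood $V$ of $p$ there is a neighborhood $U$ of $p$ with $\phi(t,x)\in V$ for all $t\ge 0$, $x\in U$; it is Lyapunov unstable if the same holds with $t\le 0$. A map $\xi:\mathbb{R}\to M$ is a $d$-pseudotrajectory of $\phi$ if $\mathrm{dist}(\xi(t+s),\phi(s,\xi(t)))<d$ for all $t\in\mathbb{R}$, $s\in[0,1]$. $\mathrm{Rep}$ denotes the set of orientation-preserving homeomorphisms $\mathbb{R}\to\mathbb{R}$, and for $\varepsilon>0$, $\mathrm{Rep}(\varepsilon)=\{f\in\mathrm{Rep}: |\frac{f(a)-f(b)}{a-b}-1|<\varepsilon \text{ for all } a>b\}$. $\phi$ has the standard shadowing property if for every $\varepsilon>0$ there is $d>0$ such that for every $d$-pseudotrajectory $\xi$ there are $x\in M$ and $h\in\mathrm{Rep}(\varepsilon)$ with $\mathrm{dist}(\xi(t),\phi(h(t),x))<\varepsilon$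 for all $t\in\mathbb{R}$. $\phi$ has the oriented shadowing property if the same holds with $h\in\mathrm{Rep}$ instead of $h\in\mathrm{Rep}(\varepsilon)$. *)

theory Defs
  imports "HOL-Analysis.Analysis"
begin

definition is_flow :: "(real \<Rightarrow> 'a::metric_space \<Rightarrow> 'a) \<Rightarrow> bool" where
  "is_flow \<phi> \<longleftrightarrow> continuous_on UNIV (\<lambda>(t, x). \<phi> t x)
     \<and> (\<forall>x. \<phi> 0 x = x) \<and> (\<forall>s t x. \<phi> (s + t) x = \<phi> s (\<phi> t x))"

definition Sing :: "(real \<Rightarrow> 'a \<Rightarrow> 'a) \<Rightarrow> 'a set" where
  "Sing \<phi> = {x. \<forall>t. \<phi> t x = x}"

definition nbhd :: "'a::topological_space set \<Rightarrow> 'a \<Rightarrow> bool" where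
  "nbhd V p \<longleftrightarrow> (\<exists>W. open W \<and> p \<in> W \<and> W \<subseteq> V)"

definition lyap_stable :: "(real \<Rightarrow> 'a::topological_space \<Rightarrow> 'a) \<Rightarrow> 'a \<Rightarrow> bool" where
  "lyap_stable \<phi> p \<longleftrightarrow> (\<forall>V. nbhd V p \<longrightarrow>
     (\<exists>U. nbhd U p \<and> (\<forall>t\<ge>0. \<forall>x\<in>U. \<phi> t x \<in> V)))"

definition lyap_unstable :: "(real \<Rightarrow> 'a::topological_space \<Rightarrow> 'a) \<Rightarrow> 'a \<Rightarrow> bool" where
  "lyap_unstable \<phi> p \<longleftrightarrow> (\<forall>V. nbhd V p \<longrightarrow>
     (\<exists>U. nbhd U p \<and> (\<forall>t\<le>0. \<forall>x\<in>U. \<phi> t x \<in> V)))"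

definition pseudo_traj :: "(real \<Rightarrow> 'a::metric_space \<Rightarrow> 'a) \<Rightarrow> real \<Rightarrow> (real \<Rightarrow> 'a) \<Rightarrow> bool" where
  "pseudo_traj \<phi> d \<xi> \<longleftrightarrow> (\<forall>t. \<forall>s\<in>{0..1}. dist (\<xi> (t + s)) (\<phi> s (\<xi> t)) < d)"

definition Rep :: "(real \<Rightarrow> real) set" where
  "Rep = {h. homeomorphism UNIV UNIV h (inv h) \<and> strict_mono h}"

definition Rep_eps :: "real \<Rightarrow> (real \<Rightarrow> real) set" where
  "Rep_eps \<epsilon> = {h \<in> Rep. \<forall>a b. a > b \<longrightarrow> \<bar>(h a - h b) / (a - b) - 1\<bar> < \<epsilon>}"

definition standard_shadowing :: "(real \<Rightarrow> 'a::metric_space \<Rightarrow> 'a) \<Rightarrow> bool" where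
  "standard_shadowing \<phi> \<longleftrightarrow> (\<forall>\<epsilon>>0. \<exists>d>0. \<forall>\<xi>. pseudo_traj \<phi> d \<xi> \<longrightarrow>
     (\<exists>x h. h \<in> Rep_eps \<epsilon> \<and> (\<forall>t. dist (\<xi> t) (\<phi> (h t) x) < \<epsilon>)))"

definition oriented_shadowing :: "(real \<Rightarrow> 'a::metric_space \<Rightarrow> 'a) \<Rightarrow> bool" where
  "oriented_shadowing \<phi> \<longleftrightarrow> (\<forall>\<epsilon>>0. \<exists>d>0. \<forall>\<xi>. pseudo_traj \<phi> d \<xi> \<longrightarrow>
     (\<exists>x h. h \<in> Rep \<and> (\<forall>t. dist (\<xi> t) (\<phi> (h t) x) < \<epsilon>)))"

end

theory Submission
  imports Defs
begin

text \<open>Standard shadowing trivially implies oriented shadowing. Conversely, let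
  \<open>y t = \<phi> (h t) x\<close> be an oriented shadow of a fine pseudotrajectory. Away from the
  singularities every point is moved a definite distance by the flow in time \<open>\<plusminus>a\<close>,
  while over unit time \<open>y\<close> stays close to its own unreparametrised flow line; hence, as long as
  \<open>y\<close> stays away from \<open>Sing \<phi>\<close>, the reparametrisation \<open>h\<close> gains or loses less than \<open>a\<close>
  per unit time. Once \<open>y\<close> comes close to a Lyapunov stable singularity it stays near it
  in forward time, and near an unstable one in backward time. So the time axis splits into an
  initial and a final ray, on which \<open>y\<close> sits near a single singularity and the time change
  may be replaced by unit speed, and a middle interval on which \<open>h\<close> already has almost unit
  speed. Interpolating the resulting time change linearly between integers gives a
  reparametrisation with all slopes in \<open>(1 - \<epsilon>, 1 + \<epsilon>)\<close>.\<close>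

section \<open>Flows on compact spaces\<close>

lemma is_flow_zero: "is_flow \<phi> \<Longrightarrow> \<phi> 0 x = x"
  unfolding is_flow_def by auto

lemma is_flow_add: "is_flow \<phi> \<Longrightarrow> \<phi> (s + t) x = \<phi> s (\<phi> t x)"
  unfolding is_flow_def by auto

lemma is_flow_continuous_on: "is_flow \<phi> \<Longrightarrow> continuous_on UNIV (\<lambda>(t, x). \<phi> t x)"
  unfolding is_flow_def by auto

lemma continuous_on_flow:
  assumes "is_flow \<phi>" "continuous_on A f" "continuous_on A g"
  shows "continuous_on A (\<lambda>s. \<phi> (f s) (g s))"
  using continuous_on_compose2[OF is_flow_continuous_on[OF assms(1)] continuous_on_Pair[OF assms(2,3)]]
  by simp

lemma tendsto_flow:
  assumes "is_flow \<phi>" "(f \<longlongrightarrow> t) F" "(g \<longlongrightarrow> x) F"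
  shows "((\<lambda>n. \<phi> (f n) (g n)) \<longlongrightarrow> \<phi> t x) F"
proof -
  have "isCont (\<lambda>(t, x). \<phi> t x) (t, x)"
    using is_flow_continuous_on[OF assms(1)] by (simp add: continuous_on_eq_continuous_at)
  from isCont_tendsto_compose[OF this tendsto_Pair[OF assms(2,3)]] show ?thesis by simp
qed

lemma flow_fixed_multiple_period:
  assumes fl: "is_flow \<phi>" and per: "\<phi> \<sigma> w = w"
  shows "\<phi> (of_int k * \<sigma>) w = w"
proof -
  have pos: "\<phi> (of_nat n * \<sigma>) w = w" for n
    by (induction n) (simp_all add: is_flow_zero[OF fl] is_flow_add[OF fl] per algebra_simps)
  have "\<phi> (- (of_nat n * \<sigma>)) w = w" for n
    using is_flow_add[OF fl, of "- (of_nat n * \<sigma>)" "of_nat n * \<sigma>" w] pos[of n]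
    by (simp add: is_flow_zero[OF fl])
  with pos show ?thesis
    by (cases k rule: int_cases2) (simp_all add: algebra_simps)
qed

lemma compact_flow_uniformly_continuous:
  fixes \<phi> :: "real \<Rightarrow> 'a::metric_space \<Rightarrow> 'a"
  assumes "compact (UNIV :: 'a set)" "is_flow \<phi>" "e > 0"
  obtains d where "d > 0"
    "\<And>s t p q. s \<in> {-1..1} \<Longrightarrow> t \<in> {-1..1} \<Longrightarrow> dist (s, p) (t, q) < d \<Longrightarrow> dist (\<phi> s p) (\<phi> t q) < e"
proof -
  have "uniformly_continuous_on ({-1..1} \<times> UNIV) (\<lambda>(t, x). \<phi> t x)"
    using assms(1) by (intro compact_uniformly_continuous compact_Times
        continuous_on_subset[OF is_flow_continuous_on[OF assms(2)]]) auto
  then show ?thesis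
    using that assms(3) unfolding uniformly_continuous_on_def by fastforce
qed

lemma compact_flow_uniformly_small_time:
  fixes \<phi> :: "real \<Rightarrow> 'a::metric_space \<Rightarrow> 'a"
  assumes "compact (UNIV :: 'a set)" "is_flow \<phi>" "e > 0"
  obtains a where "a > 0" "\<And>z \<tau>. \<bar>\<tau>\<bar> < a \<Longrightarrow> dist (\<phi> \<tau> z) z < e"
proof -
  obtain d where "d > 0" and
    d: "\<And>s t p q. s \<in> {-1..1} \<Longrightarrow> t \<in> {-1..1} \<Longrightarrow> dist (s, p) (t, q) < d \<Longrightarrow> dist (\<phi> s p) (\<phi> t q) < e"
    using compact_flow_uniformly_continuous[OF assms] by blast
  show ?thesis
  proof (rule that[of "min d 1"])
    fix z and \<tau> :: real assume "\<bar>\<tau>\<bar> < min d 1"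
    then show "dist (\<phi> \<tau> z) z < e"
      using d[of \<tau> 0 z z] is_flow_zero[OF assms(2)] by (auto simp: dist_Pair_Pair dist_real_def abs_less_iff)
  qed (use \<open>d > 0\<close> in simp)
qed

lemma compact_flow_uniformly_continuous_unit_time:
  fixes \<phi> :: "real \<Rightarrow> 'a::metric_space \<Rightarrow> 'a"
  assumes "compact (UNIV :: 'a set)" "is_flow \<phi>" "e > 0"
  obtains d where "d > 0" "\<And>s p q. s \<in> {0..1} \<Longrightarrow> dist p q < d \<Longrightarrow> dist (\<phi> s p) (\<phi> s q) < e"
proof -
  obtain d where "d > 0" and
    d: "\<And>s t p q. s \<in> {-1..1} \<Longrightarrow> t \<in> {-1..1} \<Longrightarrow> dist (s, p) (t, q) < d \<Longrightarrow> dist (\<phi> s p) (\<phi> t q) < e"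
    using compact_flow_uniformly_continuous[OF assms] by blast
  show ?thesis
    by (rule that[OF \<open>d > 0\<close>]) (use d in \<open>auto simp: dist_Pair_Pair\<close>)
qed

lemma fixed_point_of_vanishing_periods:
  assumes fl: "is_flow \<phi>" and w: "w \<longlonglongrightarrow> l" and \<sigma>: "\<sigma> \<longlonglongrightarrow> 0" "\<And>n. \<sigma> n > 0"
    and per: "\<And>n. \<phi> (\<sigma> n) (w n) = w n"
  shows "\<phi> t l = l"
proof -
  define r where "r n = t - of_int \<lfloor>t / \<sigma> n\<rfloor> * \<sigma> n" for n
  have r_bounds: "0 \<le> r n \<and> r n \<le> \<sigma> n" for n
  proof -
    have "of_int \<lfloor>t / \<sigma> n\<rfloor> \<le> t / \<sigma> n" "t / \<sigma> n < of_int \<lfloor>t / \<sigma> n\<rfloor> + 1"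
      by linarith+
    then have "of_int \<lfloor>t / \<sigma> n\<rfloor> * \<sigma> n \<le> t" "t < (of_int \<lfloor>t / \<sigma> n\<rfloor> + 1) * \<sigma> n"
      using \<sigma>(2)[of n] by (simp_all only: pos_le_divide_eq pos_divide_less_eq)
    then show ?thesis by (simp add: r_def algebra_simps)
  qed
  have "r \<longlonglongrightarrow> 0"
    by (rule tendsto_sandwich[of "\<lambda>n. 0" _ _ \<sigma>]) (use r_bounds \<sigma> in auto)
  moreover have "\<phi> t (w n) = \<phi> (r n) (w n)" for n
    using is_flow_add[OF fl, of "r n" "of_int \<lfloor>t / \<sigma> n\<rfloor> * \<sigma> n" "w n"]
      flow_fixed_multiple_period[OF fl per] by (simp add: r_def)
  ultimately have "(\<lambda>n. \<phi> t (w n)) \<longlonglongrightarrow> \<phi> 0 l"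
    using tendsto_flow[OF fl _ w] by simp
  moreover have "(\<lambda>n. \<phi> t (w n)) \<longlonglongrightarrow> \<phi> t l"
    using tendsto_flow[OF fl tendsto_const w] .
  ultimately show ?thesis
    using LIMSEQ_unique is_flow_zero[OF fl] by metis
qed

lemma compact_no_short_periods:
  fixes \<phi> :: "real \<Rightarrow> 'a::metric_space \<Rightarrow> 'a"
  assumes K: "compact K" and fl: "is_flow \<phi>" and not_fixed: "\<And>z. z \<in> K \<Longrightarrow> \<exists>t. \<phi> t z \<noteq> z"
  obtains P where "P > 0" "\<And>z \<tau>. z \<in> K \<Longrightarrow> 0 < \<tau> \<Longrightarrow> \<tau> \<le> P \<Longrightarrow> \<phi> \<tau> z \<noteq> z"
proof (rule ccontr)
  assume "\<not> thesis"
  with that have "\<forall>n. \<exists>z \<tau>. z \<in> K \<and> 0 < \<tau> \<and> \<tau> \<le> inverse (real (Suc n)) \<and> \<phi> \<tau> z = z"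
    by (metis inverse_positive_iff_positive of_nat_0_less_iff zero_less_Suc)
  then obtain z \<tau> where z: "\<And>n. z n \<in> K" and \<tau>: "\<And>n. 0 < \<tau> n" "\<And>n. \<tau> n \<le> inverse (real (Suc n))"
    and per: "\<And>n. \<phi> (\<tau> n) (z n) = z n"
    by metis
  obtain l r where "l \<in> K" "strict_mono r" and lim: "(z \<circ> r) \<longlonglongrightarrow> l"
    using compact_imp_seq_compact[OF K] z by (metis seq_compactE)
  have "\<tau> \<longlonglongrightarrow> 0"
    by (rule tendsto_sandwich[of "\<lambda>n. 0" _ _ "\<lambda>n. inverse (real (Suc n))"])
      (use \<tau> LIMSEQ_inverse_real_of_nat in \<open>auto intro!: always_eventually less_imp_le\<close>)
  then have "(\<tau> \<circ> r) \<longlonglongrightarrow> 0"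
    using \<open>strict_mono r\<close> by (rule LIMSEQ_subseq_LIMSEQ)
  then have "\<phi> t l = l" for t
    by (rule fixed_point_of_vanishing_periods[OF fl lim]) (use \<tau> per in auto)
  then show False
    using not_fixed[OF \<open>l \<in> K\<close>] by simp
qed

lemma compact_flow_displacement_bounded_below:
  fixes \<phi> :: "real \<Rightarrow> 'a::metric_space \<Rightarrow> 'a"
  assumes "compact K" "is_flow \<phi>" "\<And>z. z \<in> K \<Longrightarrow> \<phi> \<tau> z \<noteq> z"
  obtains \<delta> where "\<delta> > 0" "\<And>z. z \<in> K \<Longrightarrow> \<delta> \<le> dist (\<phi> \<tau> z) z"
proof (cases "K = {}")
  case False
  have "continuous_on K (\<lambda>z. dist (\<phi> \<tau> z) z)"
    by (intro continuous_intros continuous_on_flow[OF assms(2)])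
  then obtain z0 where "z0 \<in> K" "\<And>z. z \<in> K \<Longrightarrow> dist (\<phi> \<tau> z0) z0 \<le> dist (\<phi> \<tau> z) z"
    using continuous_attains_inf[OF assms(1) False] by blast
  then show ?thesis
    using that[of "dist (\<phi> \<tau> z0) z0"] assms(3) by simp
qed (use that[of 1] in simp)

lemma regular_points_move:
  fixes \<phi> :: "real \<Rightarrow> 'a::metric_space \<Rightarrow> 'a"
  assumes cpt: "compact (UNIV :: 'a set)" and fl: "is_flow \<phi>" and "\<rho> > 0" "a0 > 0"
  obtains a \<delta> where "0 < a" "a \<le> a0" "0 < \<delta>"
    "\<And>z \<tau>. (\<And>p. p \<in> Sing \<phi> \<Longrightarrow> \<rho> \<le> dist p z) \<Longrightarrow> \<bar>\<tau>\<bar> = a \<Longrightarrow> \<delta> \<le> dist (\<phi> \<tau> z) z"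
proof -
  define K where "K = (\<Inter>p\<in>Sing \<phi>. {z. \<rho> \<le> dist p z})"
  have "closed K"
    unfolding K_def by (intro closed_INT ballI closed_Collect_le continuous_intros)
  then have "compact K"
    using compact_Int_closed[OF cpt] by simp
  have not_fixed: "\<exists>t. \<phi> t z \<noteq> z" if "z \<in> K" for z
    using that \<open>\<rho> > 0\<close> unfolding K_def Sing_def by force
  obtain P where "P > 0" and P: "\<And>z \<tau>. z \<in> K \<Longrightarrow> 0 < \<tau> \<Longrightarrow> \<tau> \<le> P \<Longrightarrow> \<phi> \<tau> z \<noteq> z"
    using compact_no_short_periods[OF \<open>compact K\<close> fl not_fixed] by blast
  define a where "a = min a0 P"
  have "0 < a" "a \<le> a0" "a \<le> P"
    using \<open>a0 > 0\<close> \<open>P > 0\<close> by (auto simp: a_def)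
  have moves_pos: "\<phi> a z \<noteq> z" if "z \<in> K" for z
    using P[OF that \<open>0 < a\<close> \<open>a \<le> P\<close>] .
  have moves_neg: "\<phi> (- a) z \<noteq> z" if "z \<in> K" for z
    using P[OF that \<open>0 < a\<close> \<open>a \<le> P\<close>] is_flow_add[OF fl, of a "- a" z] is_flow_zero[OF fl, of z] by auto
  obtain \<delta>1 where \<delta>1: "\<delta>1 > 0" "\<And>z. z \<in> K \<Longrightarrow> \<delta>1 \<le> dist (\<phi> a z) z"
    using compact_flow_displacement_bounded_below[OF \<open>compact K\<close> fl moves_pos] by blast
  obtain \<delta>2 where \<delta>2: "\<delta>2 > 0" "\<And>z. z \<in> K \<Longrightarrow> \<delta>2 \<le> dist (\<phi> (- a) z) z"
    using compact_flow_displacement_bounded_below[OF \<open>compact K\<close> fl moves_neg] by blast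
  show ?thesis
  proof (rule that[OF \<open>0 < a\<close> \<open>a \<le> a0\<close>, of "min \<delta>1 \<delta>2"])
    fix z \<tau> assume "\<And>p. p \<in> Sing \<phi> \<Longrightarrow> \<rho> \<le> dist p z" "\<bar>\<tau>\<bar> = a"
    then have "z \<in> K" "\<tau> = a \<or> \<tau> = - a"
      unfolding K_def by auto
    then show "min \<delta>1 \<delta>2 \<le> dist (\<phi> \<tau> z) z"
      using \<delta>1(2)[of z] \<delta>2(2)[of z] by auto
  qed (use \<delta>1(1) \<delta>2(1) in simp)
qed

section \<open>Neighbourhoods of finitely many singularities\<close>

lemma nbhd_metric: "nbhd V (p::'a::metric_space) \<longleftrightarrow> (\<exists>r>0. ball p r \<subseteq> V)"
  unfolding nbhd_def
proof
  assume "\<exists>W. open W \<and> p \<in> W \<and> W \<subseteq> V"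
  then obtain W where "open W" "p \<in> W" "W \<subseteq> V"
    by blast
  then obtain r where "r > 0" "ball p r \<subseteq> W"
    using open_contains_ball by blast
  with \<open>W \<subseteq> V\<close> show "\<exists>r>0. ball p r \<subseteq> V"
    by blast
next
  assume "\<exists>r>0. ball p r \<subseteq> V"
  then obtain r where "r > 0" "ball p r \<subseteq> V"
    by blast
  then show "\<exists>W. open W \<and> p \<in> W \<and> W \<subseteq> V"
    by (intro exI[of _ "ball p r"] conjI) simp_all
qed

lemma lyap_stable_eventually:
  fixes p :: "'a::metric_space"
  assumes "lyap_stable \<phi> p" "\<eta> > 0"
  shows "\<forall>\<^sub>F r in at_right 0. \<forall>w t. dist p w < r \<longrightarrow> 0 \<le> t \<longrightarrow> dist p (\<phi> t w) < \<eta>"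
proof -
  have "nbhd (ball p \<eta>) p"
    unfolding nbhd_metric using assms(2) by (intro exI[of _ \<eta>]) simp
  then obtain U where U: "nbhd U p" "\<And>t x. 0 \<le> t \<Longrightarrow> x \<in> U \<Longrightarrow> \<phi> t x \<in> ball p \<eta>"
    using assms(1) unfolding lyap_stable_def by blast
  then obtain r where "r > 0" "ball p r \<subseteq> U"
    unfolding nbhd_metric by blast
  then show ?thesis
    unfolding eventually_at_right_field using U(2)
    by (intro exI[of _ r] conjI allI impI) (simp_all add: subset_iff)
qed

lemma lyap_unstable_eventually:
  fixes p :: "'a::metric_space"
  assumes "lyap_unstable \<phi> p" "\<eta> > 0"
  shows "\<forall>\<^sub>F r in at_right 0. \<forall>w t. dist p w < r \<longrightarrow> t \<le> 0 \<longrightarrow> dist p (\<phi> t w) < \<eta>"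
proof -
  have "nbhd (ball p \<eta>) p"
    unfolding nbhd_metric using assms(2) by (intro exI[of _ \<eta>]) simp
  then obtain U where U: "nbhd U p" "\<And>t x. t \<le> 0 \<Longrightarrow> x \<in> U \<Longrightarrow> \<phi> t x \<in> ball p \<eta>"
    using assms(1) unfolding lyap_unstable_def by blast
  then obtain r where "r > 0" "ball p r \<subseteq> U"
    unfolding nbhd_metric by blast
  then show ?thesis
    unfolding eventually_at_right_field using U(2)
    by (intro exI[of _ r] conjI allI impI) (simp_all add: subset_iff)
qed

lemma finite_separated_eventually:
  fixes S :: "'a::metric_space set"
  assumes "finite S"
  shows "\<forall>\<^sub>F \<eta> in at_right 0. \<forall>p\<in>S. \<forall>q\<in>S. \<forall>z. dist p z < \<eta> \<longrightarrow> dist q z < \<eta> \<longrightarrow> p = q"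
proof -
  have "\<forall>\<^sub>F \<eta> in at_right 0. \<forall>z. dist p z < \<eta> \<longrightarrow> dist q z < \<eta> \<longrightarrow> p = q" for p q :: 'a
  proof (cases "p = q")
    case False
    show ?thesis
      unfolding eventually_at_right_field
    proof (intro exI[of _ "dist p q / 2"] conjI allI impI)
      fix \<eta> z assume "\<eta> < dist p q / 2" "dist p z < \<eta>" "dist q z < \<eta>"
      then show "p = q"
        using dist_triangle2[of p q z] by linarith
    qed (use False in simp)
  qed simp
  then show ?thesis
    using assms by (simp add: eventually_ball_finite_distrib)
qed

lemma eventually_at_right_0_obtain:
  assumes "\<forall>\<^sub>F r in at_right (0::real). P r"
  obtains r where "r > 0" "P r"
  using eventually_happens[OF eventually_conj[OF eventually_at_right_less assms]] by auto

lemma singularity_radii: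
  fixes \<phi> :: "real \<Rightarrow> 'a::metric_space \<Rightarrow> 'a"
  assumes "finite S" "\<And>p. p \<in> S1 \<Longrightarrow> lyap_stable \<phi> p" "\<And>p. p \<in> S2 \<Longrightarrow> lyap_unstable \<phi> p"
    and "S1 \<union> S2 \<subseteq> S" "\<eta>0 > 0"
  obtains \<eta> \<rho> where "0 < \<eta>" "\<eta> < \<eta>0" "0 < \<rho>"
    "\<And>p q z. p \<in> S \<Longrightarrow> q \<in> S \<Longrightarrow> dist p z < \<eta> \<Longrightarrow> dist q z < \<eta> \<Longrightarrow> p = q"
    "\<And>p w t. p \<in> S1 \<Longrightarrow> dist p w < \<rho> \<Longrightarrow> 0 \<le> t \<Longrightarrow> dist p (\<phi> t w) < \<eta>"
    "\<And>p w t. p \<in> S2 \<Longrightarrow> dist p w < \<rho> \<Longrightarrow> t \<le> 0 \<Longrightarrow> dist p (\<phi> t w) < \<eta>"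
proof -
  have "\<forall>\<^sub>F \<eta> in at_right 0. \<eta> < \<eta>0"
    unfolding eventually_at_right_field using \<open>\<eta>0 > 0\<close> by blast
  then have "\<forall>\<^sub>F \<eta> in at_right 0. \<eta> < \<eta>0 \<and>
      (\<forall>p\<in>S. \<forall>q\<in>S. \<forall>z. dist p z < \<eta> \<longrightarrow> dist q z < \<eta> \<longrightarrow> p = q)"
    using finite_separated_eventually[OF \<open>finite S\<close>] by (rule eventually_conj)
  then obtain \<eta> where \<eta>: "0 < \<eta>" "\<eta> < \<eta>0"
    "\<forall>p\<in>S. \<forall>q\<in>S. \<forall>z. dist p z < \<eta> \<longrightarrow> dist q z < \<eta> \<longrightarrow> p = q"
    by (rule eventually_at_right_0_obtain) blast
  have "finite S1" "finite S2"
    using assms(1,4) finite_subset by auto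
  then have "\<forall>\<^sub>F \<rho> in at_right 0. (\<forall>p\<in>S1. \<forall>w t. dist p w < \<rho> \<longrightarrow> 0 \<le> t \<longrightarrow> dist p (\<phi> t w) < \<eta>)
      \<and> (\<forall>p\<in>S2. \<forall>w t. dist p w < \<rho> \<longrightarrow> t \<le> 0 \<longrightarrow> dist p (\<phi> t w) < \<eta>)"
    using lyap_stable_eventually[OF assms(2) \<open>0 < \<eta>\<close>] lyap_unstable_eventually[OF assms(3) \<open>0 < \<eta>\<close>]
    by (intro eventually_conj) (simp_all add: eventually_ball_finite_distrib)
  then obtain \<rho> where "0 < \<rho>" and \<rho>:
    "\<forall>p\<in>S1. \<forall>w t. dist p w < \<rho> \<longrightarrow> 0 \<le> t \<longrightarrow> dist p (\<phi> t w) < \<eta>"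
    "\<forall>p\<in>S2. \<forall>w t. dist p w < \<rho> \<longrightarrow> t \<le> 0 \<longrightarrow> dist p (\<phi> t w) < \<eta>"
    by (rule eventually_at_right_0_obtain) blast
  show ?thesis
    by (rule that[OF \<eta>(1,2) \<open>0 < \<rho>\<close>]) (use \<eta>(3) \<rho> in blast)+
qed

section \<open>Reparametrizations\<close>

lemma RepD:
  assumes "h \<in> Rep"
  shows "continuous_on UNIV h" "strict_mono h" "surj h"
  using assms unfolding Rep_def homeomorphism_def by auto

lemma Rep_eps_subset_Rep: "Rep_eps \<epsilon> \<subseteq> Rep"
  unfolding Rep_eps_def by auto

definition lin_interp :: "(int \<Rightarrow> real) \<Rightarrow> real \<Rightarrow> real" where
  "lin_interp v t = v \<lfloor>t\<rfloor> + (t - of_int \<lfloor>t\<rfloor>) * (v (\<lfloor>t\<rfloor> + 1) - v \<lfloor>t\<rfloor>)"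

lemma lin_interp_strict_mono:
  assumes inc: "\<And>k. v k < v (k + 1)" and "s < t"
  shows "lin_interp v s < lin_interp v t"
proof (cases "\<lfloor>t\<rfloor> = \<lfloor>s\<rfloor>")
  case True
  have "0 < (t - s) * (v (\<lfloor>s\<rfloor> + 1) - v \<lfloor>s\<rfloor>)"
    using inc[of "\<lfloor>s\<rfloor>"] \<open>s < t\<close> by simp
  then show ?thesis
    unfolding lin_interp_def True by (simp add: algebra_simps)
next
  case False
  then have floors: "\<lfloor>s\<rfloor> + 1 \<le> \<lfloor>t\<rfloor>"
    using \<open>s < t\<close> floor_mono[of s t] by linarith
  have v_mono: "v k \<le> v l" if "k \<le> l" for k l
    using that by (induction l rule: int_ge_induct) (auto intro: order.trans less_imp_le inc)
  have "(s - of_int \<lfloor>s\<rfloor>) * (v (\<lfloor>s\<rfloor> + 1) - v \<lfloor>s\<rfloor>) < 1 * (v (\<lfloor>s\<rfloor> + 1) - v \<lfloor>s\<rfloor>)"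
    by (rule mult_strict_right_mono) (use inc[of "\<lfloor>s\<rfloor>"] in linarith)+
  then have "lin_interp v s < v (\<lfloor>s\<rfloor> + 1)"
    unfolding lin_interp_def by simp
  also have "\<dots> \<le> v \<lfloor>t\<rfloor>"
    using v_mono[OF floors] .
  also have "v \<lfloor>t\<rfloor> \<le> lin_interp v t"
    using inc[of "\<lfloor>t\<rfloor>"] unfolding lin_interp_def by simp
  finally show ?thesis .
qed

lemma lin_interp_slope_gt:
  assumes "\<And>k. m < v (k + 1) - v k" "s < t"
  shows "m * (t - s) < lin_interp v t - lin_interp v s"
proof -
  define w where "w k = v k - m * of_int k" for k
  have "lin_interp w s < lin_interp w t"
    by (rule lin_interp_strict_mono) (use assms in \<open>auto simp: w_def algebra_simps\<close>)
  moreover have "lin_interp w r = lin_interp v r - m * r" for r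
    unfolding lin_interp_def w_def by (simp add: algebra_simps)
  ultimately show ?thesis by (simp add: algebra_simps)
qed

lemma lin_interp_slope_lt:
  assumes "\<And>k. v (k + 1) - v k < M" "s < t"
  shows "lin_interp v t - lin_interp v s < M * (t - s)"
proof -
  have "(- M) * (t - s) < lin_interp (\<lambda>k. - v k) t - lin_interp (\<lambda>k. - v k) s"
  proof (rule lin_interp_slope_gt)
    show "- M < - v (k + 1) - - v k" for k
      using assms(1)[of k] by simp
  qed (rule assms(2))
  moreover have "lin_interp (\<lambda>k. - v k) r = - lin_interp v r" for r
    unfolding lin_interp_def by (simp add: algebra_simps)
  ultimately show ?thesis by simp
qed

lemma surj_if_slope_bounded_below:
  fixes f :: "real \<Rightarrow> real"
  assumes cont: "continuous_on UNIV f" and m: "0 < m"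
    and lower: "\<And>s t. s < t \<Longrightarrow> m * (t - s) < f t - f s"
  shows "surj f"
proof (rule surjI)
  fix y :: real
  define T where "T = \<bar>y - f 0\<bar> / m + 1"
  have "m * T > \<bar>y - f 0\<bar>" "T > 0"
    using m by (auto simp: T_def field_simps)
  then have "f (- T) < y" "y < f T"
    using lower[of "- T" 0] lower[of 0 T] by auto
  then have "\<exists>t. f t = y"
    using IVT'[of f "- T" y T] continuous_on_subset[OF cont] \<open>T > 0\<close> by force
  then show "f (SOME t. f t = y) = y"
    by (rule someI_ex)
qed

lemma Rep_if_slope_bounds:
  fixes f :: "real \<Rightarrow> real"
  assumes m: "0 < m"
    and lower: "\<And>s t. s < t \<Longrightarrow> m * (t - s) < f t - f s"
    and upper: "\<And>s t. s < t \<Longrightarrow> f t - f s < M * (t - s)"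
  shows "f \<in> Rep"
proof -
  have mono: "strict_mono f"
  proof (rule strict_monoI)
    fix s t :: real assume "s < t"
    then show "f s < f t"
      using lower[OF \<open>s < t\<close>] mult_pos_pos[OF m, of "t - s"] by simp
  qed
  have bi_lipschitz: "m * dist s t \<le> dist (f s) (f t) \<and> dist (f s) (f t) \<le> M * dist s t" for s t
    using lower[of s t] upper[of s t] lower[of t s] upper[of t s] strict_monoD[OF mono, of s t]
      strict_monoD[OF mono, of t s]
    by (cases s t rule: linorder_cases) (auto simp: dist_real_def)
  have cont: "continuous_on UNIV f"
    by (rule lipschitz_on_continuous_on[of M]) (use bi_lipschitz bi_lipschitz[of 0 1] m in \<open>auto intro!: lipschitz_onI\<close>)
  have "surj f"
    using cont m lower by (rule surj_if_slope_bounded_below)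
  have "continuous_on UNIV (inv f)"
  proof (rule lipschitz_on_continuous_on[of "1 / m"], rule lipschitz_onI)
    fix s t :: real
    have "m * dist (inv f s) (inv f t) \<le> dist s t"
      using bi_lipschitz[of "inv f s" "inv f t"] \<open>surj f\<close> by (simp add: surj_f_inv_f)
    then show "dist (inv f s) (inv f t) \<le> 1 / m * dist s t"
      using m by (simp add: field_simps)
  qed (use m in simp)
  then have "homeomorphism UNIV UNIV f (inv f)"
    using cont \<open>surj f\<close> strict_mono_imp_inj_on[OF mono]
    by (intro homeomorphismI) (auto simp: surj_f_inv_f inv_f_f)
  with mono show ?thesis
    unfolding Rep_def by simp
qed

lemma Rep_eps_if_slope_bounds:
  fixes f :: "real \<Rightarrow> real"
  assumes "0 < c" "c < 1" "c \<le> \<epsilon>"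
    and lower: "\<And>s t. s < t \<Longrightarrow> (1 - c) * (t - s) < f t - f s"
    and upper: "\<And>s t. s < t \<Longrightarrow> f t - f s < (1 + c) * (t - s)"
  shows "f \<in> Rep_eps \<epsilon>"
proof -
  have "\<bar>(f t - f s) / (t - s) - 1\<bar> < \<epsilon>" if "s < t" for s t
  proof -
    have "1 - c < (f t - f s) / (t - s)" "(f t - f s) / (t - s) < 1 + c"
      using lower[OF that] upper[OF that] that by (simp_all add: pos_less_divide_eq pos_divide_less_eq)
    with assms(3) show ?thesis by linarith
  qed
  with Rep_if_slope_bounds[OF _ lower upper] assms(2) show ?thesis
    unfolding Rep_eps_def by auto
qed

lemma id_in_Rep_eps: "\<epsilon> > 0 \<Longrightarrow> (\<lambda>t. t) \<in> Rep_eps \<epsilon>"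
  by (rule Rep_eps_if_slope_bounds[of "min \<epsilon> (1/2)"]) (auto simp: algebra_simps)

lemma Rep_eps_approx_unit_speed:
  fixes g :: "real \<Rightarrow> real"
  assumes a: "0 < a" "a < 1" "a \<le> \<epsilon>"
    and unit_speed: "\<And>s t. s \<le> t \<Longrightarrow> t \<le> s + 1 \<Longrightarrow> \<bar>g t - g s - (t - s)\<bar> < a"
  obtains h where "h \<in> Rep_eps \<epsilon>" "\<And>t. \<bar>h t - g t\<bar> < 2 * a"
proof
  define v where "v k = g (of_int k)" for k
  have step: "\<bar>v (k + 1) - v k - 1\<bar> < a" for k
    using unit_speed[of "of_int k" "of_int k + 1"] by (simp add: v_def)
  have step_gt: "1 - a < v (k + 1) - v k" and step_lt: "v (k + 1) - v k < 1 + a" for k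
    using step[of k] by (simp_all add: abs_less_iff)
  show "lin_interp v \<in> Rep_eps \<epsilon>"
  proof (rule Rep_eps_if_slope_bounds[OF a])
    fix s t :: real assume "s < t"
    show "(1 - a) * (t - s) < lin_interp v t - lin_interp v s"
      using step_gt \<open>s < t\<close> by (rule lin_interp_slope_gt)
    show "lin_interp v t - lin_interp v s < (1 + a) * (t - s)"
      using step_lt \<open>s < t\<close> by (rule lin_interp_slope_lt)
  qed
  fix t :: real
  define f where "f = t - of_int \<lfloor>t\<rfloor>"
  have f: "0 \<le> f" "f \<le> 1"
    unfolding f_def by linarith+
  have "\<bar>g t - v \<lfloor>t\<rfloor> - f\<bar> < a"
    using unit_speed[of "of_int \<lfloor>t\<rfloor>" t] f by (simp add: v_def f_def)
  moreover have "\<bar>f * (v (\<lfloor>t\<rfloor> + 1) - v \<lfloor>t\<rfloor> - 1)\<bar> < a"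
    using step[of "\<lfloor>t\<rfloor>"] f by (simp add: abs_mult) (smt (verit) mult_left_le_one_le abs_ge_zero)
  moreover have "lin_interp v t - g t = f * (v (\<lfloor>t\<rfloor> + 1) - v \<lfloor>t\<rfloor> - 1) - (g t - v \<lfloor>t\<rfloor> - f)"
    unfolding lin_interp_def f_def by (simp add: algebra_simps)
  ultimately show "\<bar>lin_interp v t - g t\<bar> < 2 * a"
    by linarith
qed

section \<open>Splitting an orbit at the singularities\<close>

lemma down_closed_open_eq_lessThan:
  fixes L :: "real set"
  assumes "L \<noteq> {}" "bdd_above L" and down: "\<And>s t. t \<in> L \<Longrightarrow> s \<le> t \<Longrightarrow> s \<in> L"
    and open_right: "\<And>t. t \<in> L \<Longrightarrow> \<exists>t'>t. t' \<in> L"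
  shows "L = {..<Sup L}"
proof (intro set_eqI iffI)
  fix t assume "t \<in> L"
  with open_right obtain t' where "t < t'" "t' \<in> L" by blast
  with cSup_upper[OF _ assms(2)] show "t \<in> {..<Sup L}" by fastforce
next
  fix t assume "t \<in> {..<Sup L}"
  with less_cSup_iff[OF assms(1,2)] obtain t' where "t' \<in> L" "t < t'" by auto
  with down show "t \<in> L" by auto
qed

lemma up_closed_open_eq_greaterThan:
  fixes R :: "real set"
  assumes "R \<noteq> {}" "bdd_below R" and up: "\<And>s t. t \<in> R \<Longrightarrow> t \<le> s \<Longrightarrow> s \<in> R"
    and open_left: "\<And>t. t \<in> R \<Longrightarrow> \<exists>t'<t. t' \<in> R"
  shows "R = {Inf R<..}"
proof (intro set_eqI iffI)
  fix t assume "t \<in> R"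
  with open_left obtain t' where "t' < t" "t' \<in> R" by blast
  with cInf_lower[OF _ assms(2)] show "t \<in> {Inf R<..}" by fastforce
next
  fix t assume "t \<in> {Inf R<..}"
  with cInf_less_iff[OF assms(1,2)] obtain t' where "t' \<in> R" "t' < t" by auto
  with up show "t \<in> R" by auto
qed

lemma gap_retraction:
  fixes L R :: "real set"
  assumes "L \<noteq> UNIV" "R \<noteq> UNIV" "L \<inter> R = {}"
    and L_down: "\<And>s t. t \<in> L \<Longrightarrow> s \<le> t \<Longrightarrow> s \<in> L" and L_open: "\<And>t. t \<in> L \<Longrightarrow> \<exists>t'>t. t' \<in> L"
    and R_up: "\<And>s t. t \<in> R \<Longrightarrow> t \<le> s \<Longrightarrow> s \<in> R" and R_open: "\<And>t. t \<in> R \<Longrightarrow> \<exists>t'<t. t' \<in> R"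
  obtains c where "\<And>s t. s \<le> t \<Longrightarrow> c s \<le> c t \<and> c t - c s \<le> t - s"
    "\<And>s t r. c s \<le> r \<Longrightarrow> r \<le> c t \<Longrightarrow> r \<notin> L \<and> r \<notin> R"
    "\<And>t s. c t < t \<Longrightarrow> c t < s \<Longrightarrow> s \<in> R"
    "\<And>t s. t < c t \<Longrightarrow> s < c t \<Longrightarrow> s \<in> L"
proof -
  have "bdd_above L"
    using assms(1) L_down unfolding bdd_above_def by (meson UNIV_I linear subsetI subset_antisym)
  have "bdd_below R"
    using assms(2) R_up unfolding bdd_below_def by (meson UNIV_I linear subsetI subset_antisym)
  consider "L = {}" "R = {}" | \<beta> where "L = {}" "R = {\<beta><..}" | \<alpha> where "L = {..<\<alpha>}" "R = {}"
    | \<alpha> \<beta> where "L = {..<\<alpha>}" "R = {\<beta><..}"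
  proof -
    have "L = {..<Sup L}" if "L \<noteq> {}"
      using that \<open>bdd_above L\<close> L_down L_open by (rule down_closed_open_eq_lessThan)
    moreover have "R = {Inf R<..}" if "R \<noteq> {}"
      using that \<open>bdd_below R\<close> R_up R_open by (rule up_closed_open_eq_greaterThan)
    ultimately show thesis
      using that by blast
  qed
  then show ?thesis
  proof cases
    case 1
    show ?thesis by (rule that[of "\<lambda>t. t"]) (use 1 in auto)
  next
    case (2 \<beta>)
    show ?thesis by (rule that[of "min \<beta>"]) (use 2 in \<open>auto simp: min_def split: if_splits\<close>)
  next
    case (3 \<alpha>)
    show ?thesis by (rule that[of "max \<alpha>"]) (use 3 in \<open>auto simp: max_def split: if_splits\<close>)
  next
    case (4 \<alpha> \<beta>)
    with \<open>L \<inter> R = {}\<close> have "\<alpha> \<le> \<beta>"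
      by (metis dense disjoint_iff greaterThan_iff lessThan_iff not_le)
    show ?thesis
      by (rule that[of "\<lambda>t. max \<alpha> (min \<beta> t)"]) (use 4 \<open>\<alpha> \<le> \<beta>\<close> in \<open>auto simp: max_def min_def split: if_splits\<close>)
  qed
qed

definition visited_before :: "(real \<Rightarrow> 'a::metric_space) \<Rightarrow> 'a set \<Rightarrow> real \<Rightarrow> real set" where
  "visited_before y S \<rho> = {t. \<exists>p\<in>S. \<exists>s<t. dist p (y s) < \<rho>}"

definition visited_after :: "(real \<Rightarrow> 'a::metric_space) \<Rightarrow> 'a set \<Rightarrow> real \<Rightarrow> real set" where
  "visited_after y S \<rho> = {t. \<exists>p\<in>S. \<exists>s>t. dist p (y s) < \<rho>}"

lemma visited_after_iff: "t \<in> visited_after y S \<rho> \<longleftrightarrow> - t \<in> visited_before (\<lambda>s. y (- s)) S \<rho>"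
  unfolding visited_after_def visited_before_def
  by (auto intro!: bexI) (metis minus_less_iff minus_minus)+

lemma visited_before_mono: "t \<in> visited_before y S \<rho> \<Longrightarrow> t \<le> t' \<Longrightarrow> t' \<in> visited_before y S \<rho>"
  unfolding visited_before_def by force

lemma visited_after_mono: "t \<in> visited_after y S \<rho> \<Longrightarrow> t' \<le> t \<Longrightarrow> t' \<in> visited_after y S \<rho>"
  unfolding visited_after_def by force

lemma visited_before_open:
  assumes "t \<in> visited_before y S \<rho>"
  shows "\<exists>t'<t. t' \<in> visited_before y S \<rho>"
proof -
  obtain p s where "p \<in> S" "s < t" "dist p (y s) < \<rho>"
    using assms unfolding visited_before_def by blast
  then show ?thesis
    unfolding visited_before_def by (intro exI[of _ "(s + t) / 2"]) (auto intro!: bexI[of _ p] exI[of _ s])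
qed

lemma visited_after_open:
  assumes "t \<in> visited_after y S \<rho>"
  shows "\<exists>t'>t. t' \<in> visited_after y S \<rho>"
proof -
  obtain t' where "t' < - t" "t' \<in> visited_before (\<lambda>s. y (- s)) S \<rho>"
    using visited_before_open assms unfolding visited_after_iff by blast
  then show ?thesis
    unfolding visited_after_iff by (intro exI[of _ "- t'"]) auto
qed

lemma visited_before_near:
  assumes stable: "\<And>p s t. p \<in> S \<Longrightarrow> dist p (y s) < \<rho> \<Longrightarrow> s \<le> t \<Longrightarrow> dist p (y t) < \<eta>"
    and unique: "\<And>p q z. p \<in> S \<Longrightarrow> q \<in> S \<Longrightarrow> dist p z < \<eta> \<Longrightarrow> dist q z < \<eta> \<Longrightarrow> p = q"
    and "visited_before y S \<rho> \<noteq> {}"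
  shows "\<exists>p\<in>S. \<forall>t\<in>visited_before y S \<rho>. dist p (y t) < \<eta>"
proof -
  have tail: "\<exists>p\<in>S. \<forall>s\<ge>t. dist p (y s) < \<eta>" if "t \<in> visited_before y S \<rho>" for t
  proof -
    obtain p s where "p \<in> S" "s < t" "dist p (y s) < \<rho>"
      using \<open>t \<in> visited_before y S \<rho>\<close> unfolding visited_before_def by blast
    then show ?thesis
      using stable[of p s] by (intro bexI[of _ p] allI impI) auto
  qed
  obtain t0 where "t0 \<in> visited_before y S \<rho>"
    using assms(3) by blast
  then obtain p where p: "p \<in> S" "\<And>s. t0 \<le> s \<Longrightarrow> dist p (y s) < \<eta>"
    using tail by blast
  have near: "dist p (y t) < \<eta>" if "t \<in> visited_before y S \<rho>" for t
  proof -
    obtain p' where p': "p' \<in> S" "\<And>s. t \<le> s \<Longrightarrow> dist p' (y s) < \<eta>"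
      using tail[OF \<open>t \<in> visited_before y S \<rho>\<close>] by blast
    have "p' = p"
      using unique[of p' p "y (max t t0)"] p p' by simp
    with p' show ?thesis by simp
  qed
  show ?thesis
    by (intro bexI[OF _ p(1)] ballI near)
qed

lemma visited_after_near:
  assumes unstable: "\<And>p s t. p \<in> S \<Longrightarrow> dist p (y s) < \<rho> \<Longrightarrow> t \<le> s \<Longrightarrow> dist p (y t) < \<eta>"
    and unique: "\<And>p q z. p \<in> S \<Longrightarrow> q \<in> S \<Longrightarrow> dist p z < \<eta> \<Longrightarrow> dist q z < \<eta> \<Longrightarrow> p = q"
    and "visited_after y S \<rho> \<noteq> {}"
  shows "\<exists>p\<in>S. \<forall>t\<in>visited_after y S \<rho>. dist p (y t) < \<eta>"
proof -
  obtain t0 where "t0 \<in> visited_after y S \<rho>"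
    using assms(3) by blast
  then have "visited_before (\<lambda>s. y (- s)) S \<rho> \<noteq> {}"
    unfolding visited_after_iff by blast
  then have "\<exists>p\<in>S. \<forall>t\<in>visited_before (\<lambda>s. y (- s)) S \<rho>. dist p (y (- t)) < \<eta>"
    by (intro visited_before_near) (use unstable unique in auto)
  then obtain p where "p \<in> S" and p: "\<And>t. t \<in> visited_before (\<lambda>s. y (- s)) S \<rho> \<Longrightarrow> dist p (y (- t)) < \<eta>"
    by blast
  have "dist p (y t) < \<eta>" if "t \<in> visited_after y S \<rho>" for t
    using p[of "- t"] that unfolding visited_after_iff by simp
  with \<open>p \<in> S\<close> show ?thesis
    by blast
qed

lemma unvisited_far:
  fixes y :: "real \<Rightarrow> 'a::metric_space"
  assumes y: "continuous_on UNIV y" and "p \<in> S1 \<union> S2"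
    and "t \<notin> visited_before y S1 \<rho>" "t \<notin> visited_after y S2 \<rho>"
  shows "\<rho> \<le> dist p (y t)"
proof (rule ccontr)
  assume "\<not> \<rho> \<le> dist p (y t)"
  then have "t \<in> {s. dist p (y s) < \<rho>}"
    by simp
  moreover have "open {s. dist p (y s) < \<rho>}"
    by (intro open_Collect_less continuous_intros y)
  ultimately obtain e where "e > 0" and e_ball: "ball t e \<subseteq> {s. dist p (y s) < \<rho>}"
    unfolding open_contains_ball by blast
  have "dist p (y (t - e / 2)) < \<rho>" "dist p (y (t + e / 2)) < \<rho>"
    using subsetD[OF e_ball, of "t - e / 2"] subsetD[OF e_ball, of "t + e / 2"] \<open>e > 0\<close>
    by (simp_all add: dist_real_def)
  with \<open>e > 0\<close> have "p \<notin> S1" "p \<notin> S2"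
    using assms(3,4) unfolding visited_before_def visited_after_def by force+
  with assms(2) show False
    by blast
qed

text \<open>Times after a visit of \<open>y\<close> to a stable point form a final open ray, on which \<open>y\<close> stays
  near that point; dually for an unstable point and an initial ray. On the gap between the two
  rays \<open>y\<close> stays away from all these points.\<close>

lemma orbit_splitting:
  fixes y :: "real \<Rightarrow> 'a::metric_space"
  assumes y: "continuous_on UNIV y"
    and stable: "\<And>p s t. p \<in> S1 \<Longrightarrow> dist p (y s) < \<rho> \<Longrightarrow> s \<le> t \<Longrightarrow> dist p (y t) < \<eta>"
    and unstable: "\<And>p s t. p \<in> S2 \<Longrightarrow> dist p (y s) < \<rho> \<Longrightarrow> t \<le> s \<Longrightarrow> dist p (y t) < \<eta>"
    and disjoint: "S1 \<inter> S2 = {}"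
    and unique: "\<And>p q z. p \<in> S1 \<union> S2 \<Longrightarrow> q \<in> S1 \<union> S2 \<Longrightarrow> dist p z < \<eta> \<Longrightarrow> dist q z < \<eta> \<Longrightarrow> p = q"
  obtains (near) p where "p \<in> S1 \<union> S2" "\<And>t. dist p (y t) < \<eta>"
  | (split) c where "\<And>s t. s \<le> t \<Longrightarrow> c s \<le> c t \<and> c t - c s \<le> t - s"
      "\<And>s t r p. c s \<le> r \<Longrightarrow> r \<le> c t \<Longrightarrow> p \<in> S1 \<union> S2 \<Longrightarrow> \<rho> \<le> dist p (y r)"
      "\<And>t. c t < t \<Longrightarrow> \<exists>p\<in>S1 \<union> S2. \<forall>s>c t. dist p (y s) < \<eta>"
      "\<And>t. t < c t \<Longrightarrow> \<exists>p\<in>S1 \<union> S2. \<forall>s<c t. dist p (y s) < \<eta>"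
proof -
  define R where "R = visited_before y S1 \<rho>"
  define L where "L = visited_after y S2 \<rho>"
  have R_near: "\<exists>p\<in>S1. \<forall>t\<in>R. dist p (y t) < \<eta>" if "R \<noteq> {}"
    unfolding R_def by (rule visited_before_near) (use stable unique that in \<open>auto simp: R_def\<close>)
  have L_near: "\<exists>q\<in>S2. \<forall>t\<in>L. dist q (y t) < \<eta>" if "L \<noteq> {}"
    unfolding L_def by (rule visited_after_near) (use unstable unique that in \<open>auto simp: L_def\<close>)
  have "L \<inter> R = {}"
  proof (rule equals0I)
    fix t assume "t \<in> L \<inter> R"
    then obtain q p where "q \<in> S2" "dist q (y t) < \<eta>" "p \<in> S1" "dist p (y t) < \<eta>"
      using L_near R_near by blast
    with disjoint unique[of p q "y t"] show False
      by blast
  qed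
  show ?thesis
  proof (cases "L = UNIV \<or> R = UNIV")
    case True
    then show ?thesis
      using L_near R_near near by blast
  next
    case False
    then have "L \<noteq> UNIV" "R \<noteq> UNIV"
      by auto
    have L_down: "s \<in> L" if "t \<in> L" "s \<le> t" for s t
      using that visited_after_mono unfolding L_def by blast
    have L_open: "\<exists>t'>t. t' \<in> L" if "t \<in> L" for t
      using that visited_after_open unfolding L_def by blast
    have R_up: "s \<in> R" if "t \<in> R" "t \<le> s" for s t
      using that visited_before_mono unfolding R_def by blast
    have R_open: "\<exists>t'<t. t' \<in> R" if "t \<in> R" for t
      using that visited_before_open unfolding R_def by blast
    obtain c where c: "\<And>s t. s \<le> t \<Longrightarrow> c s \<le> c t \<and> c t - c s \<le> t - s"
        "\<And>s t r. c s \<le> r \<Longrightarrow> r \<le> c t \<Longrightarrow> r \<notin> L \<and> r \<notin> R"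
        "\<And>t s. c t < t \<Longrightarrow> c t < s \<Longrightarrow> s \<in> R"
        "\<And>t s. t < c t \<Longrightarrow> s < c t \<Longrightarrow> s \<in> L"
      by (rule gap_retraction[of L R])
        (use \<open>L \<noteq> UNIV\<close> \<open>R \<noteq> UNIV\<close> \<open>L \<inter> R = {}\<close> L_down L_open R_up R_open in blast)+
    show ?thesis
    proof (rule split[of c])
      show "\<rho> \<le> dist p (y r)" if "c s \<le> r" "r \<le> c t" "p \<in> S1 \<union> S2" for s t r p
        using unvisited_far[OF y that(3)] c(2)[OF that(1,2)] unfolding L_def R_def by blast
      show "\<And>t. c t < t \<Longrightarrow> \<exists>p\<in>S1 \<union> S2. \<forall>s>c t. dist p (y s) < \<eta>"
        using R_near c(3) by blast
      show "\<And>t. t < c t \<Longrightarrow> \<exists>p\<in>S1 \<union> S2. \<forall>s<c t. dist p (y s) < \<eta>"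
        using L_near c(4) by blast
    qed (fact c(1))
  qed
qed

section \<open>Shadowing\<close>

lemma pseudo_traj_shadow_tracks_flow:
  assumes "pseudo_traj \<phi> d \<xi>" "s \<in> {0..1}"
    and shadow: "\<And>t. dist (\<xi> t) (y t) < e"
    and cont: "\<And>p q. dist p q < e \<Longrightarrow> dist (\<phi> s p) (\<phi> s q) < \<theta>"
  shows "dist (y (u + s)) (\<phi> s (y u)) < e + d + \<theta>"
proof -
  have "dist (\<xi> (u + s)) (\<phi> s (\<xi> u)) < d"
    using assms(1,2) unfolding pseudo_traj_def by blast
  moreover have "dist (\<phi> s (\<xi> u)) (\<phi> s (y u)) < \<theta>"
    using cont shadow by blast
  ultimately show ?thesis
    using shadow[of "u + s"] dist_triangle[of "y (u + s)" "\<phi> s (y u)" "\<xi> (u + s)"]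
      dist_triangle[of "\<xi> (u + s)" "\<phi> s (y u)" "\<phi> s (\<xi> u)"] by (simp add: dist_commute)
qed

lemma reparametrized_orbit_drift_lt:
  fixes \<phi> :: "real \<Rightarrow> 'a::metric_space \<Rightarrow> 'a"
  assumes fl: "is_flow \<phi>" and h: "continuous_on UNIV h" and "0 \<le> w" "0 < a"
    and track: "\<And>s. 0 \<le> s \<Longrightarrow> s \<le> w \<Longrightarrow> dist (\<phi> (h (u + s)) x) (\<phi> s (\<phi> (h u) x)) < \<delta>"
    and moves: "\<And>s \<tau>. 0 \<le> s \<Longrightarrow> s \<le> w \<Longrightarrow> \<bar>\<tau>\<bar> = a \<Longrightarrow>
                  \<delta> \<le> dist (\<phi> \<tau> (\<phi> s (\<phi> (h u) x))) (\<phi> s (\<phi> (h u) x))"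
  shows "\<bar>h (u + w) - h u - w\<bar> < a"
proof (rule ccontr)
  define \<tau> where "\<tau> s = h (u + s) - h u - s" for s
  have "continuous_on {0..w} (\<lambda>s. h (u + s))"
    by (rule continuous_on_compose2[OF h]) (auto intro: continuous_intros)
  then have "continuous_on {0..w} (\<lambda>s. \<bar>\<tau> s\<bar>)"
    unfolding \<tau>_def by (intro continuous_intros)
  moreover assume "\<not> ?thesis"
  ultimately obtain s where s: "0 \<le> s" "s \<le> w" "\<bar>\<tau> s\<bar> = a"
    using IVT'[of "\<lambda>s. \<bar>\<tau> s\<bar>" 0 a w] \<open>0 \<le> w\<close> \<open>0 < a\<close> by (auto simp: \<tau>_def)
  define z where "z = \<phi> s (\<phi> (h u) x)"
  have "\<phi> (h (u + s)) x = \<phi> (\<tau> s) z"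
    using is_flow_add[OF fl, of "\<tau> s" "s + h u" x] is_flow_add[OF fl, of s "h u" x]
    by (simp add: \<tau>_def z_def)
  then have "dist (\<phi> (\<tau> s) z) z < \<delta>"
    using track[OF s(1,2)] by (simp add: z_def)
  with moves[OF s] show False
    unfolding z_def by linarith
qed

lemma frozen_reparametrization_unit_speed:
  fixes \<phi> :: "real \<Rightarrow> 'a::metric_space \<Rightarrow> 'a"
  assumes fl: "is_flow \<phi>" and h: "continuous_on UNIV h"
    and track: "\<And>u s. 0 \<le> s \<Longrightarrow> s \<le> 1 \<Longrightarrow> dist (\<phi> (h (u + s)) x) (\<phi> s (\<phi> (h u) x)) < \<delta>"
    and moves: "\<And>z \<tau>. (\<And>p. p \<in> S \<Longrightarrow> \<rho> / 2 \<le> dist p z) \<Longrightarrow> \<bar>\<tau>\<bar> = a \<Longrightarrow> \<delta> \<le> dist (\<phi> \<tau> z) z"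
    and "\<delta> \<le> \<rho> / 2" "0 < a"
    and c_mono: "\<And>s t. s \<le> t \<Longrightarrow> c s \<le> c t \<and> c t - c s \<le> t - s"
    and c_far: "\<And>s t r p. c s \<le> r \<Longrightarrow> r \<le> c t \<Longrightarrow> p \<in> S \<Longrightarrow> \<rho> \<le> dist p (\<phi> (h r) x)"
    and "s \<le> t" "t \<le> s + 1"
  shows "\<bar>h (c t) + (t - c t) - (h (c s) + (s - c s)) - (t - s)\<bar> < a"
proof -
  have "\<bar>h (c s + (c t - c s)) - h (c s) - (c t - c s)\<bar> < a"
  proof (rule reparametrized_orbit_drift_lt[OF fl h _ \<open>0 < a\<close>])
    fix r assume r: "0 \<le> r" "r \<le> c t - c s"
    have track_r: "dist (\<phi> (h (c s + r)) x) (\<phi> r (\<phi> (h (c s)) x)) < \<delta>"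
      using c_mono[OF \<open>s \<le> t\<close>] \<open>t \<le> s + 1\<close> r by (intro track) auto
    then show "dist (\<phi> (h (c s + r)) x) (\<phi> r (\<phi> (h (c s)) x)) < \<delta>" .
    show "\<delta> \<le> dist (\<phi> \<tau> (\<phi> r (\<phi> (h (c s)) x))) (\<phi> r (\<phi> (h (c s)) x))" if "\<bar>\<tau>\<bar> = a" for \<tau>
    proof (rule moves[OF _ that])
      fix p assume "p \<in> S"
      then have "\<rho> \<le> dist p (\<phi> (h (c s + r)) x)"
        using c_far[of s "c s + r" t p] r by simp
      then show "\<rho> / 2 \<le> dist p (\<phi> r (\<phi> (h (c s)) x))"
        using track_r \<open>\<delta> \<le> \<rho> / 2\<close>
          dist_triangle2[of p "\<phi> (h (c s + r)) x" "\<phi> r (\<phi> (h (c s)) x)"] by linarith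
    qed
  qed (use c_mono[OF \<open>s \<le> t\<close>] in simp)
  then show ?thesis
    by (simp add: algebra_simps)
qed

lemma frozen_reparametrization_close:
  fixes orb :: "real \<Rightarrow> 'a::metric_space"
  assumes h: "strict_mono h" "surj h" and "0 \<le> \<eta>"
    and shadow: "\<And>t. dist (\<xi> t) (orb (h t)) < e"
    and after: "\<And>t. c t < t \<Longrightarrow> \<exists>p. \<forall>s>c t. dist p (orb (h s)) < \<eta>"
    and before: "\<And>t. t < c t \<Longrightarrow> \<exists>p. \<forall>s<c t. dist p (orb (h s)) < \<eta>"
  shows "dist (\<xi> t) (orb (h (c t) + (t - c t))) < e + 2 * \<eta>"
proof -
  obtain t' where t': "h t' = h (c t) + (t - c t)"
    using \<open>surj h\<close> by (metis surjD)
  have close: "dist (\<xi> t) (orb (h t')) < e + 2 * \<eta>"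
    if "dist p (orb (h t)) < \<eta>" "dist p (orb (h t')) < \<eta>" for p
    using shadow[of t] that dist_triangle[of "\<xi> t" "orb (h t')" "orb (h t)"]
      dist_triangle3[of "orb (h t)" "orb (h t')" p]
    by linarith
  show ?thesis
  proof (cases "c t" t rule: linorder_cases)
    case less
    then have "c t < t'"
      using t' strict_mono_less[OF h(1), of "c t" t'] by simp
    with less after[OF less] close show ?thesis
      unfolding t'[symmetric] by blast
  next
    case equal
    then show ?thesis
      using shadow[of t] \<open>0 \<le> \<eta>\<close> by simp
  next
    case greater
    then have "t' < c t"
      using t' strict_mono_less[OF h(1), of t' "c t"] by simp
    with greater before[OF greater] close show ?thesis
      unfolding t'[symmetric] by blast
  qed
qed

lemma Rep_eps_shadow_of_unit_speed_shadow:
  fixes \<phi> :: "real \<Rightarrow> 'a::metric_space \<Rightarrow> 'a"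
  assumes fl: "is_flow \<phi>" and a: "0 < a" "a < 1" "a \<le> \<epsilon>"
    and unit_speed: "\<And>s t. s \<le> t \<Longrightarrow> t \<le> s + 1 \<Longrightarrow> \<bar>g t - g s - (t - s)\<bar> < a"
    and close: "\<And>t. dist (\<xi> t) (\<phi> (g t) x) < e"
    and small_time: "\<And>z \<tau>. \<bar>\<tau>\<bar> < 2 * a \<Longrightarrow> dist (\<phi> \<tau> z) z < \<theta>"
    and "e + \<theta> \<le> \<epsilon>"
  shows "\<exists>h. h \<in> Rep_eps \<epsilon> \<and> (\<forall>t. dist (\<xi> t) (\<phi> (h t) x) < \<epsilon>)"
proof -
  obtain h where h: "h \<in> Rep_eps \<epsilon>" "\<And>t. \<bar>h t - g t\<bar> < 2 * a"
    using Rep_eps_approx_unit_speed a unit_speed by blast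
  have "dist (\<xi> t) (\<phi> (h t) x) < \<epsilon>" for t
  proof -
    have "dist (\<phi> (h t) x) (\<phi> (g t) x) < \<theta>"
      using small_time[OF h(2)[of t]] is_flow_add[OF fl, of "h t - g t" "g t" x] by simp
    then show ?thesis
      using close[of t] dist_triangle2[of "\<xi> t" "\<phi> (h t) x" "\<phi> (g t) x"] \<open>e + \<theta> \<le> \<epsilon>\<close> by linarith
  qed
  with h(1) show ?thesis
    by blast
qed

lemma Rep_eps_shadow_of_Rep_shadow:
  fixes \<phi> :: "real \<Rightarrow> 'a::metric_space \<Rightarrow> 'a"
  assumes fl: "is_flow \<phi>" and "h \<in> Rep"
    and shadow: "\<And>t. dist (\<xi> t) (\<phi> (h t) x) < e"
    and track: "\<And>u s. 0 \<le> s \<Longrightarrow> s \<le> 1 \<Longrightarrow> dist (\<phi> (h (u + s)) x) (\<phi> s (\<phi> (h u) x)) < \<delta>"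
    and stable: "\<And>p w t. p \<in> S1 \<Longrightarrow> dist p w < \<rho> \<Longrightarrow> 0 \<le> t \<Longrightarrow> dist p (\<phi> t w) < \<eta>"
    and unstable: "\<And>p w t. p \<in> S2 \<Longrightarrow> dist p w < \<rho> \<Longrightarrow> t \<le> 0 \<Longrightarrow> dist p (\<phi> t w) < \<eta>"
    and fixed: "\<And>p t. p \<in> S1 \<union> S2 \<Longrightarrow> \<phi> t p = p"
    and disjoint: "S1 \<inter> S2 = {}"
    and unique: "\<And>p q z. p \<in> S1 \<union> S2 \<Longrightarrow> q \<in> S1 \<union> S2 \<Longrightarrow> dist p z < \<eta> \<Longrightarrow> dist q z < \<eta> \<Longrightarrow> p = q"
    and moves: "\<And>z \<tau>. (\<And>p. p \<in> S1 \<union> S2 \<Longrightarrow> \<rho> / 2 \<le> dist p z) \<Longrightarrow> \<bar>\<tau>\<bar> = a \<Longrightarrow> \<delta> \<le> dist (\<phi> \<tau> z) z"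
    and "\<delta> \<le> \<rho> / 2" "0 < a" "a < 1" "a \<le> \<epsilon>" "0 \<le> \<eta>"
    and small_time: "\<And>z \<tau>. \<bar>\<tau>\<bar> < 2 * a \<Longrightarrow> dist (\<phi> \<tau> z) z < \<theta>"
    and budget: "e + 2 * \<eta> + \<theta> \<le> \<epsilon>"
  shows "\<exists>x h. h \<in> Rep_eps \<epsilon> \<and> (\<forall>t. dist (\<xi> t) (\<phi> (h t) x) < \<epsilon>)"
proof -
  note h = RepD[OF \<open>h \<in> Rep\<close>]
  define y where "y t = \<phi> (h t) x" for t
  have y_shift: "y t = \<phi> (h t - h s) (y s)" for s t
    unfolding y_def is_flow_add[OF fl, symmetric] by simp
  have "dist (\<phi> 0 x) x < \<theta>"
    using small_time[of 0] \<open>0 < a\<close> by simp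
  then have "\<theta> > 0"
    using zero_le_dist[of "\<phi> 0 x" x] by linarith
  have y_cont: "continuous_on UNIV y"
    unfolding y_def by (intro continuous_on_flow[OF fl] h(1) continuous_intros)
  have y_stable: "dist p (y t) < \<eta>" if "p \<in> S1" "dist p (y s) < \<rho>" "s \<le> t" for p s t
    using stable[OF that(1,2)] strict_mono_less_eq[OF h(2)] that(3) y_shift[of t s] by simp
  have y_unstable: "dist p (y t) < \<eta>" if "p \<in> S2" "dist p (y s) < \<rho>" "t \<le> s" for p s t
    using unstable[OF that(1,2)] strict_mono_less_eq[OF h(2)] that(3) y_shift[of t s] by simp
  show ?thesis
  proof (rule orbit_splitting[of y S1 \<rho> \<eta> S2])
    fix p assume near: "p \<in> S1 \<union> S2" "\<And>t. dist p (y t) < \<eta>"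
    show ?thesis
    proof (intro exI conjI allI)
      fix t
      show "dist (\<xi> t) (\<phi> t p) < \<epsilon>"
        using shadow[of t] near(2)[of t] fixed[OF near(1)] dist_triangle2[of "\<xi> t" p "y t"]
          budget \<open>\<theta> > 0\<close> \<open>0 \<le> \<eta>\<close> by (simp add: y_def)
    qed (rule id_in_Rep_eps, use \<open>0 < a\<close> \<open>a \<le> \<epsilon>\<close> in linarith)
  next
    fix c assume split: "\<And>s t. s \<le> t \<Longrightarrow> c s \<le> c t \<and> c t - c s \<le> t - s"
      "\<And>s t r p. c s \<le> r \<Longrightarrow> r \<le> c t \<Longrightarrow> p \<in> S1 \<union> S2 \<Longrightarrow> \<rho> \<le> dist p (y r)"
      "\<And>t. c t < t \<Longrightarrow> \<exists>p\<in>S1 \<union> S2. \<forall>s>c t. dist p (y s) < \<eta>"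
      "\<And>t. t < c t \<Longrightarrow> \<exists>p\<in>S1 \<union> S2. \<forall>s<c t. dist p (y s) < \<eta>"
    \<comment> \<open>outside the gap \<open>y\<close> stays near one fixed point, so there the time change may run at unit speed\<close>
    define g where "g t = h (c t) + (t - c t)" for t
    have "\<bar>g t - g s - (t - s)\<bar> < a" if "s \<le> t" "t \<le> s + 1" for s t
      unfolding g_def
    proof (rule frozen_reparametrization_unit_speed[OF fl h(1) track])
      show "\<And>z \<tau>. (\<And>p. p \<in> S1 \<union> S2 \<Longrightarrow> \<rho> / 2 \<le> dist p z) \<Longrightarrow> \<bar>\<tau>\<bar> = a \<Longrightarrow> \<delta> \<le> dist (\<phi> \<tau> z) z"
        by (fact moves)
      show "\<And>s t r p. c s \<le> r \<Longrightarrow> r \<le> c t \<Longrightarrow> p \<in> S1 \<union> S2 \<Longrightarrow> \<rho> \<le> dist p (\<phi> (h r) x)"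
        using split(2) unfolding y_def .
    qed (use split(1) that \<open>\<delta> \<le> \<rho> / 2\<close> \<open>0 < a\<close> in auto)
    moreover have "dist (\<xi> t) (\<phi> (g t) x) < e + 2 * \<eta>" for t
      unfolding g_def using frozen_reparametrization_close[of h \<eta> \<xi> "\<lambda>\<tau>. \<phi> \<tau> x" e c] h
        shadow split(3,4) \<open>0 \<le> \<eta>\<close> by (force simp: y_def)
    ultimately have "\<exists>h'. h' \<in> Rep_eps \<epsilon> \<and> (\<forall>t. dist (\<xi> t) (\<phi> (h' t) x) < \<epsilon>)"
      using Rep_eps_shadow_of_unit_speed_shadow[OF fl \<open>0 < a\<close> \<open>a < 1\<close> \<open>a \<le> \<epsilon>\<close>] small_time budget
      by blast
    then show ?thesis
      by blast
  qed (use y_cont y_stable y_unstable disjoint unique in blast)+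
qed

lemma shadowing_scales:
  fixes \<phi> :: "real \<Rightarrow> 'a::metric_space \<Rightarrow> 'a"
  assumes cpt: "compact (UNIV :: 'a set)" and fl: "is_flow \<phi>" and fin: "finite (Sing \<phi>)"
    and lyap: "\<forall>p\<in>Sing \<phi>. lyap_stable \<phi> p \<or> lyap_unstable \<phi> p" and "\<epsilon> > 0"
  obtains S1 S2 \<eta> \<delta> \<rho> a where "S1 \<union> S2 = Sing \<phi>" "S1 \<inter> S2 = {}"
    "0 < \<eta>" "\<eta> < \<epsilon> / 8" "0 < \<delta>" "\<delta> \<le> \<rho> / 2" "0 < a" "a < 1" "a \<le> \<epsilon>"
    "\<And>p q z. p \<in> S1 \<union> S2 \<Longrightarrow> q \<in> S1 \<union> S2 \<Longrightarrow> dist p z < \<eta> \<Longrightarrow> dist q z < \<eta> \<Longrightarrow> p = q"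
    "\<And>p w t. p \<in> S1 \<Longrightarrow> dist p w < \<rho> \<Longrightarrow> 0 \<le> t \<Longrightarrow> dist p (\<phi> t w) < \<eta>"
    "\<And>p w t. p \<in> S2 \<Longrightarrow> dist p w < \<rho> \<Longrightarrow> t \<le> 0 \<Longrightarrow> dist p (\<phi> t w) < \<eta>"
    "\<And>z \<tau>. (\<And>p. p \<in> S1 \<union> S2 \<Longrightarrow> \<rho> / 2 \<le> dist p z) \<Longrightarrow> \<bar>\<tau>\<bar> = a \<Longrightarrow> \<delta> \<le> dist (\<phi> \<tau> z) z"
    "\<And>z \<tau>. \<bar>\<tau>\<bar> < 2 * a \<Longrightarrow> dist (\<phi> \<tau> z) z < \<epsilon> / 4"
proof -
  define S1 where "S1 = {p \<in> Sing \<phi>. lyap_stable \<phi> p}"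
  define S2 where "S2 = Sing \<phi> - S1"
  have S12: "S1 \<union> S2 = Sing \<phi>" "S1 \<inter> S2 = {}"
    by (auto simp: S1_def S2_def)
  obtain \<eta> \<rho> where \<eta>: "0 < \<eta>" "\<eta> < \<epsilon> / 8" and "0 < \<rho>"
    and unique: "\<And>p q z. p \<in> Sing \<phi> \<Longrightarrow> q \<in> Sing \<phi> \<Longrightarrow> dist p z < \<eta> \<Longrightarrow> dist q z < \<eta> \<Longrightarrow> p = q"
    and stable: "\<And>p w t. p \<in> S1 \<Longrightarrow> dist p w < \<rho> \<Longrightarrow> 0 \<le> t \<Longrightarrow> dist p (\<phi> t w) < \<eta>"
    and unstable: "\<And>p w t. p \<in> S2 \<Longrightarrow> dist p w < \<rho> \<Longrightarrow> t \<le> 0 \<Longrightarrow> dist p (\<phi> t w) < \<eta>"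
    using singularity_radii[OF fin, of S1 \<phi> S2 "\<epsilon> / 8"] lyap \<open>\<epsilon> > 0\<close> S12(1)
    unfolding S1_def S2_def by auto
  obtain a0 where "a0 > 0" and small_time: "\<And>z \<tau>. \<bar>\<tau>\<bar> < a0 \<Longrightarrow> dist (\<phi> \<tau> z) z < \<epsilon> / 4"
    using compact_flow_uniformly_small_time[OF cpt fl, of "\<epsilon> / 4"] \<open>\<epsilon> > 0\<close> by auto
  obtain a \<delta> where a: "0 < a" "a \<le> min (a0 / 2) (min (1 / 2) \<epsilon>)" and "0 < \<delta>"
    and moves: "\<And>z \<tau>. (\<And>p. p \<in> Sing \<phi> \<Longrightarrow> \<rho> / 2 \<le> dist p z) \<Longrightarrow> \<bar>\<tau>\<bar> = a \<Longrightarrow> \<delta> \<le> dist (\<phi> \<tau> z) z"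
    using regular_points_move[OF cpt fl, of "\<rho> / 2" "min (a0 / 2) (min (1 / 2) \<epsilon>)"]
      \<open>0 < \<rho>\<close> \<open>a0 > 0\<close> \<open>\<epsilon> > 0\<close> by auto
  show ?thesis
  proof (rule that[OF S12 \<eta>, of "min \<delta> (\<rho> / 2)" \<rho> a])
    show "min \<delta> (\<rho> / 2) \<le> dist (\<phi> \<tau> z) z" if "\<And>p. p \<in> S1 \<union> S2 \<Longrightarrow> \<rho> / 2 \<le> dist p z" "\<bar>\<tau>\<bar> = a" for z \<tau>
      using moves[OF that(1)[unfolded S12(1)] that(2)] by linarith
    show "dist (\<phi> \<tau> z) z < \<epsilon> / 4" if "\<bar>\<tau>\<bar> < 2 * a" for z \<tau>
      using that a by (intro small_time) linarith
  qed (use a \<open>0 < \<delta>\<close> \<open>0 < \<rho>\<close> stable unstable unique[unfolded S12(1)[symmetric]] in auto)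
qed

lemma oriented_shadowing_imp_standard_shadowing:
  fixes \<phi> :: "real \<Rightarrow> 'a::metric_space \<Rightarrow> 'a"
  assumes cpt: "compact (UNIV :: 'a set)" and fl: "is_flow \<phi>" and fin: "finite (Sing \<phi>)"
    and lyap: "\<forall>p\<in>Sing \<phi>. lyap_stable \<phi> p \<or> lyap_unstable \<phi> p"
    and os: "oriented_shadowing \<phi>"
  shows "standard_shadowing \<phi>"
  unfolding standard_shadowing_def
proof (intro allI impI)
  fix \<epsilon> :: real assume "\<epsilon> > 0"
  show "\<exists>d>0. \<forall>\<xi>. pseudo_traj \<phi> d \<xi> \<longrightarrow> (\<exists>x h. h \<in> Rep_eps \<epsilon> \<and> (\<forall>t. dist (\<xi> t) (\<phi> (h t) x) < \<epsilon>))"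
  proof (rule shadowing_scales[OF cpt fl fin lyap \<open>\<epsilon> > 0\<close>])
    fix S1 S2 \<eta> \<delta> \<rho> a
    assume S12: "S1 \<union> S2 = Sing \<phi>" "S1 \<inter> S2 = {}"
      and \<eta>_bounds: "0 < \<eta>" "\<eta> < \<epsilon> / 8" and "0 < \<delta>" "\<delta> \<le> \<rho> / 2" and a: "0 < a" "a < 1" "a \<le> \<epsilon>"
      and unique: "\<And>p q z. p \<in> S1 \<union> S2 \<Longrightarrow> q \<in> S1 \<union> S2 \<Longrightarrow> dist p z < \<eta> \<Longrightarrow> dist q z < \<eta> \<Longrightarrow> p = q"
      and stable: "\<And>p w t. p \<in> S1 \<Longrightarrow> dist p w < \<rho> \<Longrightarrow> 0 \<le> t \<Longrightarrow> dist p (\<phi> t w) < \<eta>"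
      and unstable: "\<And>p w t. p \<in> S2 \<Longrightarrow> dist p w < \<rho> \<Longrightarrow> t \<le> 0 \<Longrightarrow> dist p (\<phi> t w) < \<eta>"
      and moves: "\<And>z \<tau>. (\<And>p. p \<in> S1 \<union> S2 \<Longrightarrow> \<rho> / 2 \<le> dist p z) \<Longrightarrow> \<bar>\<tau>\<bar> = a \<Longrightarrow> \<delta> \<le> dist (\<phi> \<tau> z) z"
      and small_time: "\<And>z \<tau>. \<bar>\<tau>\<bar> < 2 * a \<Longrightarrow> dist (\<phi> \<tau> z) z < \<epsilon> / 4"
    obtain e0 where "e0 > 0"
      and unif: "\<And>s p q. s \<in> {0..1} \<Longrightarrow> dist p q < e0 \<Longrightarrow> dist (\<phi> s p) (\<phi> s q) < \<delta> / 3"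
      using compact_flow_uniformly_continuous_unit_time[OF cpt fl, of "\<delta> / 3"] \<open>0 < \<delta>\<close> by auto
    define e where "e = min e0 (min (\<delta> / 3) (\<epsilon> / 8))"
    have "0 < e"
      using \<open>e0 > 0\<close> \<open>0 < \<delta>\<close> \<open>\<epsilon> > 0\<close> by (simp add: e_def)
    then obtain d0 where "d0 > 0"
      and d0: "\<And>\<xi>. pseudo_traj \<phi> d0 \<xi> \<Longrightarrow> \<exists>x h. h \<in> Rep \<and> (\<forall>t. dist (\<xi> t) (\<phi> (h t) x) < e)"
      using os unfolding oriented_shadowing_def by blast
    define d where "d = min d0 (\<delta> / 3)"
    have "\<exists>x h. h \<in> Rep_eps \<epsilon> \<and> (\<forall>t. dist (\<xi> t) (\<phi> (h t) x) < \<epsilon>)" if pt: "pseudo_traj \<phi> d \<xi>" for \<xi>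
    proof -
      have "pseudo_traj \<phi> d0 \<xi>"
        using pt unfolding pseudo_traj_def d_def by (meson min.strict_boundedE)
      then obtain x h where "h \<in> Rep" and shadow: "\<And>t. dist (\<xi> t) (\<phi> (h t) x) < e"
        using d0 by blast
      show ?thesis
      proof (rule Rep_eps_shadow_of_Rep_shadow[OF fl \<open>h \<in> Rep\<close> shadow _ stable unstable _ S12(2) unique
            moves \<open>\<delta> \<le> \<rho> / 2\<close> a less_imp_le[OF \<eta>_bounds(1)] small_time])
        fix u s :: real assume "0 \<le> s" "s \<le> 1"
        then have "dist (\<phi> (h (u + s)) x) (\<phi> s (\<phi> (h u) x)) < e + d + \<delta> / 3"
          using pt shadow unif[of s] by (intro pseudo_traj_shadow_tracks_flow[where y = "\<lambda>t. \<phi> (h t) x"])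
            (auto simp: e_def)
        then show "dist (\<phi> (h (u + s)) x) (\<phi> s (\<phi> (h u) x)) < \<delta>"
          unfolding e_def d_def by linarith
      next
        show "\<And>p t. p \<in> S1 \<union> S2 \<Longrightarrow> \<phi> t p = p"
          unfolding S12(1) Sing_def by blast
        show "e + 2 * \<eta> + \<epsilon> / 4 \<le> \<epsilon>"
          using \<eta>_bounds unfolding e_def by linarith
      qed
    qed
    moreover have "d > 0"
      using \<open>d0 > 0\<close> \<open>0 < \<delta>\<close> by (simp add: d_def)
    ultimately show ?thesis
      by blast
  qed
qed

lemma standard_shadowing_imp_oriented_shadowing:
  assumes "standard_shadowing \<phi>"
  shows "oriented_shadowing \<phi>"
  unfolding oriented_shadowing_def
proof (intro allI impI)
  fix \<epsilon> :: real assume "\<epsilon> > 0"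
  with assms obtain d where "d > 0"
    and "\<And>\<xi>. pseudo_traj \<phi> d \<xi> \<Longrightarrow> \<exists>x h. h \<in> Rep_eps \<epsilon> \<and> (\<forall>t. dist (\<xi> t) (\<phi> (h t) x) < \<epsilon>)"
    unfolding standard_shadowing_def by blast
  with Rep_eps_subset_Rep show "\<exists>d>0. \<forall>\<xi>. pseudo_traj \<phi> d \<xi> \<longrightarrow> (\<exists>x h. h \<in> Rep \<and> (\<forall>t. dist (\<xi> t) (\<phi> (h t) x) < \<epsilon>))"
    by (metis subsetD)
qed

theorem theorem1p1:
  fixes \<phi> :: "real \<Rightarrow> 'a::metric_space \<Rightarrow> 'a"
  assumes "compact (UNIV :: 'a set)"
    and "is_flow \<phi>"
    and "finite (Sing \<phi>)"
    and "\<forall>p\<in>Sing \<phi>. lyap_stable \<phi> p \<or> lyap_unstable \<phi> p"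
  shows "oriented_shadowing \<phi> \<longleftrightarrow> standard_shadowing \<phi>"
  using oriented_shadowing_imp_standard_shadowing[OF assms] standard_shadowing_imp_oriented_shadowing ..

end
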